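(* For any $n\geq2$ there is a set $\Pi$ of permutations of $[n]=\{1,\dots,n\}$ with $|\Pi|\leq C^n$, where $C>0$ is a universal constant, having the following property. Let $p\in(0,1/2]$, $\delta\in(0,1/2]$, $s\in[-1,0]$, $\nu\in(0,1]$, $L\geq1$, and $x\in\mathrm{Incomp}_n(\delta,\nu)$. Then there is $\sigma\in\Pi$ such that the vector $\widetilde y=(\mathbf Y_{\sigma(i)}(p,x,L,s))_{i=1}^n$ satisfies $$|\widetilde y_i|>\frac{\nu}{\mathcal T_p(x,L)}-1\quad\text{for all } i\leq\delta n,$$ and $$|\widetilde y_i|\leq \frac{2^{(j+1)/2}}{\sqrt\delta\,\mathcal T_p(x,L)}+1\quad\text{for all } i>2^{-j}\delta n,\ \ 0\leq j\leq\log_2(\delta n).$$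
   Context: For $\delta,\nu\in(0,1]$, $\mathrm{Comp}_n(\delta,\nu)$ is the set of unit vectors $x\in\mathbb{R}^n$ for which there exists $y\in\mathbb{R}^n$ with at most $\delta n$ nonzero coordinates and $\|x-y\|_2\leq\nu$, and $\mathrm{Incomp}_n(\delta,\nu)=S^{n-1}\setminus\mathrm{Comp}_n(\delta,\nu)$. The Lévy concentration function is $\mathcal L(\xi,t)=\sup_{\lambda}\mathbb{P}\{|\xi-\lambda|\leq t\}$. For $p\in(0,1/2]$, $x\in S^{n-1}$, $L>0$, the threshold $\mathcal T_p(x,L)$ is the supremum of all $t\in(0,1]$ with $\mathcal L(\sum_i b_ix_i,t)>Lt$, where $b_1,\dots,b_n$ are independent Bernoulli($p$) variables (value $1$ with probability $p$, $0$ otherwise); it is positive. There are universal constants $C',c'>0$ such that for each $p\in(0,1/2]$, $s\in[-1,0]$, $x\in S^{n-1}$, $L\geq1$ one fixes a vector $\mathbf Y(p,x,L,s)\in\mathbb{Z}^n$ satisfying: $\|\frac{\sqrt n}{\mathcal T_p(x,L)}x-\mathbf Y(p,x,L,s)\|_\infty\leq1$; $\mathbb{P}\{|\sum_ib_i\mathbf Y_i(p,x,L,s)+\frac{s\sqrt n}{\mathcal T_p(x,L)}\sum_ix_i|\leq t\}\leq \frac{C'L\mathcal T_p(x,L)}{\sqrt n}t$ for all $t\geq\sqrt n$; $\mathcal L(\sum_ib_i\mathbf Y_i(p,x,L,s),\sqrt n)\geq c'L\mathcal T_p(x,L)$; and $|\frac{\sqrt n}{\mathcal T_p(x,L)}\sum_ix_i-\sum_i\mathbf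 Y_i(p,x,L,s)|\leq C'\sqrt n$ (such vectors exist). *)

theory Defs
  imports "HOL-Probability.Probability" "HOL-Combinatorics.Permutations"
begin

text \<open>Vectors in R^n are functions nat => real indexed by {1..n}, vanishing outside.\<close>

definition unit_sphere :: "nat \<Rightarrow> (nat \<Rightarrow> real) set" where
  "unit_sphere n = {x. (\<forall>i. i \<notin> {1..n} \<longrightarrow> x i = 0) \<and> (\<Sum>i=1..n. (x i)\<^sup>2) = 1}"

definition Comp :: "nat \<Rightarrow> real \<Rightarrow> real \<Rightarrow> (nat \<Rightarrow> real) set" where
  "Comp n \<delta> \<nu> = {x \<in> unit_sphere n. \<exists>y::nat \<Rightarrow> real.
      (\<forall>i. i \<notin> {1..n} \<longrightarrow> y i = 0) \<and>
      real (card {i\<in>{1..n}. y i \<noteq> 0}) \<le> \<delta> * real n \<and>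
      sqrt (\<Sum>i=1..n. (x i - y i)\<^sup>2) \<le> \<nu>}"

definition Incomp :: "nat \<Rightarrow> real \<Rightarrow> real \<Rightarrow> (nat \<Rightarrow> real) set" where
  "Incomp n \<delta> \<nu> = unit_sphere n - Comp n \<delta> \<nu>"

definition bern_vec :: "real \<Rightarrow> nat \<Rightarrow> (nat \<Rightarrow> bool) pmf" where
  "bern_vec p n = Pi_pmf {1..n} False (\<lambda>_. bernoulli_pmf p)"

definition levy_conc :: "'a pmf \<Rightarrow> ('a \<Rightarrow> real) \<Rightarrow> real \<Rightarrow> real" where
  "levy_conc M X t = (SUP c::real. measure_pmf.prob M {\<omega>. \<bar>X \<omega> - c\<bar> \<le> t})"

definition bsum :: "nat \<Rightarrow> (nat \<Rightarrow> bool) \<Rightarrow> (nat \<Rightarrow> real) \<Rightarrow> real" where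
  "bsum n b a = (\<Sum>i=1..n. (if b i then 1 else 0) * a i)"

definition threshold :: "nat \<Rightarrow> real \<Rightarrow> (nat \<Rightarrow> real) \<Rightarrow> real \<Rightarrow> real" where
  "threshold n p x L = Sup {t. 0 < t \<and> t \<le> 1 \<and>
      levy_conc (bern_vec p n) (\<lambda>b. bsum n b x) t > L * t}"

definition Y_good :: "real \<Rightarrow> real \<Rightarrow> nat \<Rightarrow>
    (real \<Rightarrow> (nat \<Rightarrow> real) \<Rightarrow> real \<Rightarrow> real \<Rightarrow> nat \<Rightarrow> int) \<Rightarrow> bool" where
  "Y_good C' c' n Y \<longleftrightarrow>
    (\<forall>p s x L. 0 < p \<and> p \<le> 1/2 \<and> -1 \<le> s \<and> s \<le> 0 \<and> x \<in> unit_sphere n \<and> 1 \<le> L \<longrightarrow>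
      (let T = threshold n p x L; Yv = (\<lambda>i. real_of_int (Y p x L s i)) in
        (\<forall>i\<in>{1..n}. \<bar>sqrt n / T * x i - Yv i\<bar> \<le> 1) \<and>
        (\<forall>t. sqrt n \<le> t \<longrightarrow>
           measure_pmf.prob (bern_vec p n)
             {b. \<bar>bsum n b Yv + s * sqrt n / T * (\<Sum>i=1..n. x i)\<bar> \<le> t}
           \<le> C' * L * T / sqrt n * t) \<and>
        levy_conc (bern_vec p n) (\<lambda>b. bsum n b Yv) (sqrt n) \<ge> c' * L * T \<and>
        \<bar>sqrt n / T * (\<Sum>i=1..n. x i) - (\<Sum>i=1..n. Yv i)\<bar> \<le> C' * sqrt n))"

end

theory Submission
  imports Defs "HOL-Library.Discrete_Functions"
begin

(* Sort the coordinates of x by decreasing absolute value. Since x is a unit vector, the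
   coordinate of rank k satisfies x^2 <= 1/k, and since x is incompressible, each of the
   delta n largest coordinates exceeds nu/sqrt n. Neither fact needs the exact ranking: it is
   enough to know, for every coordinate, the dyadic block floor(log2 k) of its rank k and
   whether k <= delta n. Ordering the coordinates by this label (ties broken canonically)
   gives a permutation that still satisfies both estimates up to a factor 2, and it depends
   only on the labelling. Since a label of block l occurs at most 2^l times, there are at
   most 64^n labellings. As Y is within 1 of sqrt n x / T, the bounds transfer to Y. *)

lemma sum_lessThan_double_div2:
  fixes m :: nat
  shows "(\<Sum>v<2*m. g (v div 2)) = 2 * (\<Sum>l<m. g l :: 'a::comm_semiring_1)"
  by (induction m) (simp_all add: algebra_simps mult_2_right)

lemma sum_atMost_pow2_weighted:
  "(\<Sum>l\<le>L. (2::nat)^l * (L - l)) + L + 2 = 2^(L+1)"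
proof (induction L)
  case (Suc L)
  have "(\<Sum>l\<le>Suc L. (2::nat)^l * (Suc L - l)) = (\<Sum>l\<le>L. 2^l * (L - l)) + (\<Sum>l\<le>L. 2^l)"
    by (simp add: sum.distrib[symmetric] algebra_simps Suc_diff_le)
  moreover have "(\<Sum>l\<le>L. (2::nat)^l) + 1 = 2^(L+1)"
    by (induction L) auto
  ultimately show ?case using Suc by simp
qed simp

lemma sum_atMost_half_pow_le_2: "(\<Sum>l\<le>L. (1/2::real)^(L - l)) \<le> 2"
proof -
  have "(\<Sum>l\<le>L. (1/2::real)^(L - l)) = (\<Sum>l\<le>L. (1/2)^l)"
    by (rule sum.reindex_bij_witness[of _ "\<lambda>l. L - l" "\<lambda>l. L - l"]) auto
  also have "\<dots> = 2 - 2 * (1/2)^(L+1)"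
    by (induction L) auto
  finally show ?thesis by simp
qed

text \<open>Label \<open>v\<close> encodes the dyadic block \<open>v div 2\<close> of a rank together with one extra bit.\<close>

definition dyadic_labellings :: "'a set \<Rightarrow> nat \<Rightarrow> ('a \<Rightarrow> nat) set" where
  "dyadic_labellings A L =
     {F \<in> PiE A (\<lambda>_. {..<2*(L+1)}). \<forall>v. card {k\<in>A. F k = v} \<le> 2^(v div 2)}"

lemma finite_dyadic_labellings: "finite A \<Longrightarrow> finite (dyadic_labellings A L)"
  unfolding dyadic_labellings_def
  by (rule finite_subset[of _ "PiE A (\<lambda>_. {..<2*(L+1)})"]) (auto simp: finite_PiE)

lemma card_dyadic_labellings:
  assumes A: "finite A" and L: "2^L \<le> card A"
  shows "real (card (dyadic_labellings A L)) \<le> 64 ^ card A"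
proof -
  \<comment> \<open>Under the weight \<open>2^-(L - v div 2)\<close> per label, every admissible labelling weighs at least
     \<open>2^-4n\<close>, while all labellings together weigh \<open>(\<Sum>v w v)^n \<le> 4^n\<close>.\<close>
  define n where "n = card A"
  define V where "V = {..<2*(L+1)}"
  define w where "w v = (1/2::real)^(L - v div 2)" for v
  have sub: "dyadic_labellings A L \<subseteq> PiE A (\<lambda>_. V)"
    unfolding dyadic_labellings_def V_def by auto
  have weight: "(1/2::real)^(4*n) \<le> (\<Prod>k\<in>A. w (F k))" if F: "F \<in> dyadic_labellings A L" for F
  proof -
    have FV: "F ` A \<subseteq> V" using F sub by (auto simp: PiE_def Pi_def)
    have fibre: "card {k\<in>A. F k = v} \<le> 2^(v div 2)" for v
      using F unfolding dyadic_labellings_def by auto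
    have "(\<Sum>k\<in>A. L - F k div 2) = (\<Sum>v\<in>V. \<Sum>k\<in>{k\<in>A. F k = v}. L - F k div 2)"
      by (rule sum.group[symmetric]) (use A FV in \<open>auto simp: V_def\<close>)
    also have "\<dots> = (\<Sum>v\<in>V. card {k\<in>A. F k = v} * (L - v div 2))"
      by (rule sum.cong) auto
    also have "\<dots> \<le> (\<Sum>v\<in>V. 2^(v div 2) * (L - v div 2))"
      by (rule sum_mono) (use fibre in auto)
    also have "\<dots> = 2 * (\<Sum>l\<le>L. 2^l * (L - l))"
      using sum_lessThan_double_div2[of "\<lambda>l. 2^l * (L - l)" "L+1"]
      by (simp add: V_def lessThan_Suc_atMost)
    also have "\<dots> \<le> 2 * 2^(L+1)" using sum_atMost_pow2_weighted[of L] by linarith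
    also have "\<dots> \<le> 4 * n" using L by (simp add: n_def)
    finally have "(\<Sum>k\<in>A. L - F k div 2) \<le> 4 * n" .
    then have "(1/2::real)^(4*n) \<le> (1/2)^(\<Sum>k\<in>A. L - F k div 2)"
      by (rule power_decreasing) auto
    also have "\<dots> = (\<Prod>k\<in>A. w (F k))"
      unfolding w_def by (simp add: power_sum)
    finally show ?thesis .
  qed
  have "real (card (dyadic_labellings A L)) * (1/2)^(4*n)
      \<le> (\<Sum>F\<in>dyadic_labellings A L. \<Prod>k\<in>A. w (F k))"
    using sum_mono[OF weight] by simp
  also have "\<dots> \<le> (\<Sum>F\<in>PiE A (\<lambda>_. V). \<Prod>k\<in>A. w (F k))"
    by (rule sum_mono2[OF finite_PiE sub]) (auto simp: A V_def w_def intro!: prod_nonneg)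
  also have "\<dots> = (\<Prod>k\<in>A. \<Sum>v\<in>V. w v)"
    by (rule prod_sum_PiE[symmetric]) (auto simp: A V_def)
  also have "\<dots> = (\<Sum>v\<in>V. w v)^n" by (simp add: n_def)
  also have "\<dots> \<le> 4^n"
  proof (rule power_mono)
    have "(\<Sum>v\<in>V. w v) = 2 * (\<Sum>l\<le>L. (1/2::real)^(L - l))"
      using sum_lessThan_double_div2[of "\<lambda>l. (1/2::real)^(L - l)" "L+1"]
      by (simp add: V_def w_def lessThan_Suc_atMost)
    then show "(\<Sum>v\<in>V. w v) \<le> 4" using sum_atMost_half_pow_le_2[of L] by linarith
  qed (auto simp: w_def intro!: sum_nonneg)
  finally have h: "real (card (dyadic_labellings A L)) * (1/2)^(4*n) \<le> 4^n" .
  have "(2::real)^(4*n) * (1/2)^(4*n) = 1" by (simp add: power_mult_distrib[symmetric])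
  then have "real (card (dyadic_labellings A L))
      = real (card (dyadic_labellings A L)) * (1/2)^(4*n) * 2^(4*n)" by (simp add: algebra_simps)
  also have "\<dots> \<le> 4^n * 2^(4*n)" using h by (intro mult_right_mono) auto
  also have "\<dots> = 64^n" by (simp add: power_mult power_mult_distrib[symmetric])
  finally show ?thesis by (simp add: n_def)
qed

definition sort_perm :: "nat \<Rightarrow> (nat \<Rightarrow> 'b::linorder) \<Rightarrow> nat \<Rightarrow> nat" where
  "sort_perm n F i = (if i \<in> {1..n} then sort_key F [1..<n+1] ! (i - 1) else i)"

lemma sort_perm_permutes: "sort_perm n F permutes {1..n}"
proof (rule bij_imp_permutes)
  define zs where "zs = sort_key F [1..<n+1]"
  have "bij_betw (nth zs) {..<n} {1..n}"
    by (rule bij_betw_nth) (auto simp: zs_def length_sort)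
  moreover have "bij_betw (\<lambda>i. i - 1) {1..n} {..<n}"
    by (rule bij_betw_byWitness[where f' = Suc]) auto
  ultimately have "bij_betw (\<lambda>i. zs ! (i - 1)) {1..n} {1..n}"
    using bij_betw_trans by (fastforce simp: comp_def)
  then show "bij_betw (sort_perm n F) {1..n} {1..n}"
    by (rule bij_betw_cong[THEN iffD1, rotated]) (simp add: sort_perm_def zs_def)
  show "sort_perm n F i = i" if "i \<notin> {1..n}" for i
    unfolding sort_perm_def using that by (rule if_not_P)
qed

lemma map_sort_key_eq_sorted:
  assumes "mset (map F xs) = mset zs" and "sorted zs"
  shows "map F (sort_key F xs) = zs"
proof -
  have "sort (map F xs) = map F (sort_key F xs)"
    by (rule properties_for_sort) simp_all
  moreover have "sort (map F xs) = zs"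
    by (rule properties_for_sort) (use assms in simp_all)
  ultimately show ?thesis by simp
qed

lemma sort_perm_monotone_relabelling:
  fixes key :: "nat \<Rightarrow> 'b::linorder"
  assumes ys: "distinct ys" "set ys = {1..n}"
    and F: "\<And>q. q < n \<Longrightarrow> F (ys ! q) = key q"
    and key: "mono key"
    and i: "i \<in> {1..n}"
  obtains q where "q < n" "sort_perm n F i = ys ! q" "key q = key (i - 1)"
proof -
  define zs where "zs = sort_key F [1..<n+1]"
  have len: "length ys = n" using distinct_card[OF ys(1)] ys(2) by simp
  have upt: "set [1..<n+1] = set ys"
    by (simp only: set_upt Suc_eq_plus1[symmetric] atLeastLessThanSuc_atLeastAtMost ys(2))
  have "map F ys = map key [0..<n]"
    by (rule nth_equalityI) (simp_all add: len F)
  moreover have "mset [1..<n+1] = mset ys"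
    using upt set_eq_iff_mset_eq_distinct[OF distinct_upt ys(1)] by blast
  ultimately have "mset (map F [1..<n+1]) = mset (map key [0..<n])"
    by (metis mset_map)
  moreover have "sorted (map key [0..<n])"
    using key by (auto simp: sorted_iff_nth_mono monoD)
  ultimately have zs: "map F zs = map key [0..<n]"
    unfolding zs_def by (rule map_sort_key_eq_sorted)
  have i_zs: "i - 1 < length zs" using i by (auto simp: zs_def length_sort)
  then have "zs ! (i - 1) \<in> set ys" using upt by (metis nth_mem set_sort zs_def)
  then obtain q where q: "q < n" "ys ! q = zs ! (i - 1)"
    using len by (auto simp: in_set_conv_nth)
  have "key q = F (ys ! q)" using F[OF q(1)] by simp
  also have "\<dots> = F (zs ! (i - 1))" using q(2) by simp
  also have "\<dots> = map F zs ! (i - 1)" using i_zs by simp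
  also have "\<dots> = key (i - 1)" using zs i by auto
  finally show thesis
    using that q i by (simp add: sort_perm_def zs_def)
qed

definition dyadic_key :: "nat \<Rightarrow> nat \<Rightarrow> nat" where
  "dyadic_key m q = 2 * floor_log (q + 1) + (if q < m then 0 else 1)"

lemma mono_dyadic_key: "mono (dyadic_key m)"
proof (rule monoI)
  fix q q' :: nat assume "q \<le> q'"
  then have "floor_log (q + 1) \<le> floor_log (q' + 1)" by (intro floor_log_le_iff) simp
  with \<open>q \<le> q'\<close> show "dyadic_key m q \<le> dyadic_key m q'" by (auto simp: dyadic_key_def)
qed

lemma dyadic_key_eqD:
  "dyadic_key m q = dyadic_key m q' \<Longrightarrow> floor_log (q + 1) = floor_log (q' + 1) \<and> (q < m \<longleftrightarrow> q' < m)"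
  unfolding dyadic_key_def by (auto split: if_splits) presburger+

lemma dyadic_key_fibre_subset:
  "{q. dyadic_key m q = v} \<subseteq> {(2::nat) ^ (v div 2) - 1..<2 ^ (v div 2 + 1) - 1}"
proof
  fix q assume "q \<in> {q. dyadic_key m q = v}"
  then have "floor_log (q + 1) = v div 2" by (auto simp: dyadic_key_def)
  moreover have "2 ^ floor_log (q + 1) \<le> q + 1" by (rule floor_log_exp2_le) simp
  moreover have "q + 1 < 2 * 2 ^ floor_log (q + 1)" by (rule floor_log_exp2_gt)
  ultimately show "q \<in> {(2::nat) ^ (v div 2) - 1..<2 ^ (v div 2 + 1) - 1}" by auto
qed

lemma exists_dyadic_labelling:
  assumes ys: "distinct ys" "set ys = A"
  shows "\<exists>F\<in>dyadic_labellings A (floor_log (length ys)).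
           \<forall>q<length ys. F (ys ! q) = dyadic_key m q"
proof -
  define n where "n = length ys"
  define F where "F = restrict (\<lambda>k. dyadic_key m (the_inv_into {..<n} (nth ys) k)) A"
  have bij: "bij_betw (nth ys) {..<n} A" using ys by (simp add: bij_betw_nth n_def)
  have F_nth: "F (ys ! q) = dyadic_key m q" if "q < n" for q
  proof -
    have "ys ! q \<in> A" using that ys(2) by (auto simp: n_def)
    then show ?thesis using that bij by (simp add: F_def the_inv_into_f_f bij_betw_def)
  qed
  have "F \<in> dyadic_labellings A (floor_log n)"
    unfolding dyadic_labellings_def
  proof (intro CollectI conjI allI)
    show "F \<in> PiE A (\<lambda>_. {..<2 * (floor_log n + 1)})"
      unfolding F_def restrict_PiE_iff
    proof
      fix k assume "k \<in> A"
      then have "the_inv_into {..<n} (nth ys) k < n"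
        using bij bij_betw_the_inv_into bij_betwE by blast
      then have "floor_log (the_inv_into {..<n} (nth ys) k + 1) \<le> floor_log n"
        by (intro floor_log_le_iff) simp
      then show "dyadic_key m (the_inv_into {..<n} (nth ys) k) \<in> {..<2 * (floor_log n + 1)}"
        by (auto simp: dyadic_key_def)
    qed
    fix v
    have "{k\<in>A. F k = v} \<subseteq> nth ys ` {q. dyadic_key m q = v}"
    proof
      fix k assume k: "k \<in> {k\<in>A. F k = v}"
      then obtain q where "q < n" "k = ys ! q" using bij by (auto simp: bij_betw_def)
      then show "k \<in> nth ys ` {q. dyadic_key m q = v}" using k F_nth by auto
    qed
    moreover have fin: "finite {q. dyadic_key m q = v}"
      using dyadic_key_fibre_subset by (rule finite_subset) simp
    ultimately have "card {k\<in>A. F k = v} \<le> card (nth ys ` {q. dyadic_key m q = v})"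
      by (intro card_mono) simp_all
    also have "\<dots> \<le> card {q. dyadic_key m q = v}" using fin by (rule card_image_le)
    also have "\<dots> \<le> 2 ^ (v div 2)"
      using card_mono[OF _ dyadic_key_fibre_subset] by simp
    finally show "card {k\<in>A. F k = v} \<le> 2 ^ (v div 2)" .
  qed
  then show ?thesis using F_nth unfolding n_def by blast
qed

lemma exists_abs_decreasing_enumeration:
  fixes x :: "nat \<Rightarrow> real"
  shows "\<exists>ys. distinct ys \<and> set ys = {1..n} \<and>
           (\<forall>q q'. q \<le> q' \<longrightarrow> q' < n \<longrightarrow> \<bar>x (ys ! q')\<bar> \<le> \<bar>x (ys ! q)\<bar>)"
proof (intro exI conjI allI impI)
  define ys where "ys = sort_key (\<lambda>k. - \<bar>x k\<bar>) [1..<n+1]"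
  show "distinct ys" "set ys = {1..n}" by (auto simp: ys_def)
  fix q q' :: nat assume "q \<le> q'" "q' < n"
  moreover have "sorted (map (\<lambda>k. - \<bar>x k\<bar>) ys)" by (simp add: ys_def)
  ultimately have "map (\<lambda>k. - \<bar>x k\<bar>) ys ! q \<le> map (\<lambda>k. - \<bar>x k\<bar>) ys ! q'"
    by (intro sorted_nth_mono) (auto simp: ys_def length_sort)
  with \<open>q \<le> q'\<close> \<open>q' < n\<close> show "\<bar>x (ys ! q')\<bar> \<le> \<bar>x (ys ! q)\<bar>"
    by (simp add: ys_def length_sort)
qed

lemma incomp_large_coordinates:
  assumes x: "x \<in> Incomp n \<delta> \<nu>" and \<nu>: "0 < \<nu>"
    and ys: "distinct ys" "set ys = {1..n}"
    and dec: "\<And>q q'. q \<le> q' \<Longrightarrow> q' < n \<Longrightarrow> \<bar>x (ys ! q')\<bar> \<le> \<bar>x (ys ! q)\<bar>"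
    and q: "q < n" "real q \<le> \<delta> * real n"
  shows "\<nu> / sqrt n < \<bar>x (ys ! q)\<bar>"
proof (rule ccontr)
  assume "\<not> ?thesis"
  then have small: "\<bar>x (ys ! q)\<bar> \<le> \<nu> / sqrt n" by simp
  have len: "length ys = n" using distinct_card[OF ys(1)] ys(2) by simp
  \<comment> \<open>Otherwise the \<open>q\<close> largest coordinates of \<open>x\<close> form a \<open>\<delta>n\<close>-sparse vector within \<open>\<nu>\<close> of \<open>x\<close>.\<close>
  define S where "S = nth ys ` {..<q}"
  define y where "y k = (if k \<in> S then x k else 0)" for k
  have S: "S \<subseteq> {1..n}" unfolding S_def ys(2)[symmetric] using q len by auto
  have y_out: "\<forall>i. i \<notin> {1..n} \<longrightarrow> y i = 0" using S by (auto simp: y_def)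
  have "card {i\<in>{1..n}. y i \<noteq> 0} \<le> card S"
    by (rule card_mono) (auto simp: S_def y_def split: if_splits)
  also have "\<dots> \<le> q" unfolding S_def using card_image_le[of "{..<q}"] by simp
  finally have sparse: "real (card {i\<in>{1..n}. y i \<noteq> 0}) \<le> \<delta> * real n" using q by linarith
  have "(x k - y k)^2 \<le> \<nu>^2 / n" if k: "k \<in> {1..n}" for k
  proof (cases "k \<in> S")
    case False
    obtain q' where q': "q' < n" "ys ! q' = k" using k ys(2) len by (metis in_set_conv_nth)
    have "q \<le> q'" using False q' unfolding S_def by (metis image_eqI lessThan_iff not_le)
    then have "\<bar>x k\<bar> \<le> \<nu> / sqrt n" using dec[of q q'] q' small by auto
    then have "\<bar>x k\<bar>^2 \<le> (\<nu> / sqrt n)^2" by (intro power_mono) auto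
    then show ?thesis using False q by (simp add: y_def power_divide)
  qed (simp add: y_def)
  then have "(\<Sum>i=1..n. (x i - y i)^2) \<le> (\<Sum>i=1..n. \<nu>^2 / n)" by (rule sum_mono)
  also have "\<dots> = \<nu>^2" using q by simp
  finally have "sqrt (\<Sum>i=1..n. (x i - y i)^2) \<le> \<nu>"
    using \<nu> real_sqrt_le_mono by fastforce
  then have "x \<in> Comp n \<delta> \<nu>"
    using x y_out sparse unfolding Comp_def Incomp_def by blast
  then show False using x by (simp add: Incomp_def)
qed

lemma unit_sphere_rank_bound:
  assumes x: "x \<in> unit_sphere n"
    and ys: "distinct ys" "set ys = {1..n}"
    and dec: "\<And>q q'. q \<le> q' \<Longrightarrow> q' < n \<Longrightarrow> \<bar>x (ys ! q')\<bar> \<le> \<bar>x (ys ! q)\<bar>"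
    and q: "q < n"
  shows "real (q + 1) * (x (ys ! q))^2 \<le> 1"
proof -
  have len: "length ys = n" using distinct_card[OF ys(1)] ys(2) by simp
  have "real (q + 1) * (x (ys ! q))^2 = (\<Sum>q'\<le>q. (x (ys ! q))^2)" by simp
  also have "\<dots> \<le> (\<Sum>q'\<le>q. (x (ys ! q'))^2)"
  proof (rule sum_mono)
    fix q' assume "q' \<in> {..q}"
    then have "\<bar>x (ys ! q)\<bar> \<le> \<bar>x (ys ! q')\<bar>" using dec q by simp
    then show "(x (ys ! q))^2 \<le> (x (ys ! q'))^2" by (simp add: abs_le_square_iff)
  qed
  also have "\<dots> \<le> (\<Sum>q'<n. (x (ys ! q'))^2)" using q by (intro sum_mono2) auto
  also have "\<dots> = (\<Sum>k=1..n. (x k)^2)"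
    using bij_betw_nth[OF ys(1), of "{..<n}" "{1..n}"] len ys(2)
    by (intro sum.reindex_bij_betw) simp_all
  also have "\<dots> = 1" using x by (simp add: unit_sphere_def)
  finally show ?thesis .
qed

definition dyadic_sorting_perms :: "nat \<Rightarrow> (nat \<Rightarrow> nat) set" where
  "dyadic_sorting_perms n = sort_perm n ` dyadic_labellings {1..n} (floor_log n)"

lemma dyadic_sorting_perms_permute: "\<sigma> \<in> dyadic_sorting_perms n \<Longrightarrow> \<sigma> permutes {1..n}"
  unfolding dyadic_sorting_perms_def using sort_perm_permutes by blast

lemma card_dyadic_sorting_perms:
  assumes "1 \<le> n"
  shows "real (card (dyadic_sorting_perms n)) \<le> 64 ^ n"
proof -
  have "card (dyadic_sorting_perms n) \<le> card (dyadic_labellings {1..n} (floor_log n))"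
    unfolding dyadic_sorting_perms_def by (intro card_image_le finite_dyadic_labellings) simp
  moreover have "2 ^ floor_log n \<le> card {1..n}" using floor_log_exp2_le assms by simp
  ultimately show ?thesis using card_dyadic_labellings[of "{1..n}"] by fastforce
qed

lemma exists_dyadic_sorting_perm:
  assumes x: "x \<in> Incomp n \<delta> \<nu>" and \<nu>: "0 < \<nu>"
  shows "\<exists>\<sigma>\<in>dyadic_sorting_perms n.
     (\<forall>i\<in>{1..n}. real i \<le> \<delta> * real n \<longrightarrow> \<nu> / sqrt n < \<bar>x (\<sigma> i)\<bar>) \<and>
     (\<forall>i\<in>{1..n}. (x (\<sigma> i))^2 * real i \<le> 2)"
proof -
  obtain ys where ys: "distinct ys" "set ys = {1..n}"
    and dec: "\<And>q q'. q \<le> q' \<Longrightarrow> q' < n \<Longrightarrow> \<bar>x (ys ! q')\<bar> \<le> \<bar>x (ys ! q)\<bar>"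
    using exists_abs_decreasing_enumeration by blast
  have len: "length ys = n" using distinct_card[OF ys(1)] ys(2) by simp
  have xs: "x \<in> unit_sphere n" using x by (simp add: Incomp_def)
  define m where "m = nat \<lfloor>\<delta> * real n\<rfloor>"
  obtain F where F: "F \<in> dyadic_labellings {1..n} (floor_log n)"
    and F_nth: "\<And>q. q < n \<Longrightarrow> F (ys ! q) = dyadic_key m q"
    using exists_dyadic_labelling[OF ys, of m] len by auto
  have rank: "\<exists>q<n. sort_perm n F i = ys ! q \<and> floor_log (q + 1) = floor_log i \<and> (q < m \<longleftrightarrow> i - 1 < m)"
    if i: "i \<in> {1..n}" for i
  proof -
    obtain q where q: "q < n" "sort_perm n F i = ys ! q"
      and eq: "dyadic_key m q = dyadic_key m (i - 1)"
      using sort_perm_monotone_relabelling[OF ys F_nth mono_dyadic_key i] by blast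
    from eq have "floor_log (q + 1) = floor_log (i - 1 + 1) \<and> (q < m \<longleftrightarrow> i - 1 < m)"
      by (rule dyadic_key_eqD)
    moreover have "i - 1 + 1 = i" using i by simp
    ultimately show ?thesis using q by metis
  qed
  have "\<nu> / sqrt n < \<bar>x (sort_perm n F i)\<bar>" if i: "i \<in> {1..n}" "real i \<le> \<delta> * real n" for i
  proof -
    obtain q where q: "q < n" "sort_perm n F i = ys ! q" "q < m \<longleftrightarrow> i - 1 < m"
      using rank[OF i(1)] by blast
    have "i \<le> m" using i(2) unfolding m_def by (simp add: le_nat_iff le_floor_iff)
    then have "q < m" using q(3) i(1) by auto
    then have "real q \<le> \<delta> * real n" unfolding m_def by (simp add: zless_nat_eq_int_zless less_floor_iff)
    then show ?thesis using incomp_large_coordinates[OF x \<nu> ys dec q(1)] q(2) by simp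
  qed
  moreover have "(x (sort_perm n F i))^2 * real i \<le> 2" if i: "i \<in> {1..n}" for i
  proof -
    obtain q where q: "q < n" "sort_perm n F i = ys ! q" "floor_log (q + 1) = floor_log i"
      using rank[OF i] by blast
    have "i < 2 * 2 ^ floor_log i" by (rule floor_log_exp2_gt)
    also have "\<dots> \<le> 2 * (q + 1)" using floor_log_exp2_le[of "q + 1"] q(3) by simp
    finally have "real i \<le> 2 * real (q + 1)" by linarith
    then have "(x (ys ! q))^2 * real i \<le> (x (ys ! q))^2 * (2 * real (q + 1))"
      by (rule mult_left_mono) simp
    also have "\<dots> = 2 * (real (q + 1) * (x (ys ! q))^2)" by simp
    also have "\<dots> \<le> 2" using unit_sphere_rank_bound[OF xs ys dec q(1)] by simp
    finally show ?thesis using q(2) by simp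
  qed
  ultimately show ?thesis using F unfolding dyadic_sorting_perms_def by blast
qed

lemma Y_good_threshold_nonneg:
  fixes p s L :: real
  assumes Y: "Y_good C' c' n Y" and C': "0 < C'" and n: "0 < n"
    and "0 < p" "p \<le> 1/2" "-1 \<le> s" "s \<le> 0" "x \<in> unit_sphere n" "1 \<le> L"
  shows "0 \<le> threshold n p x L"
proof -
  \<comment> \<open>The supremum defining the threshold may range over the empty set; nonnegativity
     comes from the tail bound at \<open>t = \<surd>n\<close>, whose left-hand side is a probability.\<close>
  let ?Yv = "\<lambda>i. real_of_int (Y p x L s i)"
  let ?T = "threshold n p x L"
  have "measure_pmf.prob (bern_vec p n)
          {b. \<bar>bsum n b ?Yv + s * sqrt n / ?T * (\<Sum>i=1..n. x i)\<bar> \<le> sqrt n}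
        \<le> C' * L * ?T / sqrt n * sqrt n"
    using Y assms(4-) unfolding Y_good_def Let_def by blast
  then have "0 \<le> C' * L * ?T / sqrt n * sqrt n" by (rule order_trans[OF measure_nonneg])
  then have "0 \<le> (C' * L) * ?T" using n by simp
  moreover have "0 < C' * L" using C' \<open>1 \<le> L\<close> by simp
  ultimately show ?thesis by (simp add: zero_le_mult_iff)
qed

lemma Y_good_close:
  assumes "Y_good C' c' n Y"
    and "0 < p" "p \<le> 1/2" "-1 \<le> s" "s \<le> 0" "x \<in> unit_sphere n" "1 \<le> L" "k \<in> {1..n}"
  shows "\<bar>sqrt n / threshold n p x L * x k - Y p x L s k\<bar> \<le> 1"
  using assms unfolding Y_good_def Let_def by blast

lemma abs_gt_of_close:
  fixes N T X y \<nu> :: real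
  assumes close: "\<bar>sqrt N / T * X - y\<bar> \<le> 1" and T: "0 \<le> T" and N: "0 < N"
    and X: "\<nu> / sqrt N < \<bar>X\<bar>"
  shows "\<nu> / T - 1 < \<bar>y\<bar>"
proof (cases "T = 0")
  case False
  then have "\<nu> / T = sqrt N / T * (\<nu> / sqrt N)" using N by simp
  also have "\<dots> < sqrt N / T * \<bar>X\<bar>" using X N T False by (intro mult_strict_left_mono) auto
  also have "\<dots> = \<bar>sqrt N / T * X\<bar>" using T N by (simp add: abs_mult)
  finally show ?thesis using close by linarith
qed simp

lemma abs_le_of_close:
  fixes N T X y \<delta> i :: real and j :: nat
  assumes close: "\<bar>sqrt N / T * X - y\<bar> \<le> 1" and T: "0 \<le> T" and \<delta>: "0 < \<delta>" and N: "0 < N"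
    and X: "X^2 * i \<le> 2" and i: "2 powr (- real j) * \<delta> * N < i"
  shows "\<bar>y\<bar> \<le> 2 powr ((real j + 1) / 2) / (sqrt \<delta> * T) + 1"
proof -
  have "\<delta> * N < 2^j * i"
    using i by (simp add: powr_minus powr_realpow field_simps)
  then have "(\<delta> * N) * X^2 \<le> (2^j * i) * X^2" by (intro mult_right_mono) auto
  also have "\<dots> \<le> 2^(j+1)" using X by (simp add: mult_left_mono algebra_simps)
  finally have "N * X^2 * \<delta> \<le> 2^(j+1)" by (simp add: algebra_simps)
  then have "sqrt N * \<bar>X\<bar> * sqrt \<delta> \<le> sqrt (2^(j+1))"
    by (metis real_sqrt_abs real_sqrt_le_mono real_sqrt_mult)
  also have "\<dots> = (2 powr (real j + 1)) powr (1/2)"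
    using powr_realpow[of 2 "j + 1"] by (simp add: powr_half_sqrt add.commute)
  also have "\<dots> = 2 powr ((real j + 1) / 2)" by (simp add: powr_powr)
  finally have "sqrt N / T * \<bar>X\<bar> \<le> 2 powr ((real j + 1) / 2) / (sqrt \<delta> * T)"
    using T \<delta> by (cases "T = 0") (simp_all add: field_simps)
  moreover have "\<bar>sqrt N / T * X\<bar> = sqrt N / T * \<bar>X\<bar>" using T N by (simp add: abs_mult)
  moreover have "\<bar>y\<bar> \<le> \<bar>sqrt N / T * X\<bar> + 1"
    using close by argo
  ultimately show ?thesis by argo
qed

lemma dyadic_sorting_perm_Y_bounds:
  fixes p \<delta> s \<nu> L :: real
  assumes Y: "Y_good C' c' n Y" and C': "0 < C'" and n: "0 < n"
    and p: "0 < p" "p \<le> 1/2" and \<delta>: "0 < \<delta>" and s: "-1 \<le> s" "s \<le> 0" and \<nu>: "0 < \<nu>"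
    and L: "1 \<le> L" and x: "x \<in> Incomp n \<delta> \<nu>"
  shows "\<exists>\<sigma>\<in>dyadic_sorting_perms n.
     (\<forall>i\<in>{1..n}. real i \<le> \<delta> * real n \<longrightarrow>
        \<bar>real_of_int (Y p x L s (\<sigma> i))\<bar> > \<nu> / threshold n p x L - 1) \<and>
     (\<forall>j::nat. \<forall>i\<in>{1..n}. real i > 2 powr (- real j) * \<delta> * real n \<longrightarrow>
        \<bar>real_of_int (Y p x L s (\<sigma> i))\<bar>
          \<le> 2 powr ((real j + 1) / 2) / (sqrt \<delta> * threshold n p x L) + 1)"
proof -
  have xs: "x \<in> unit_sphere n" using x by (simp add: Incomp_def)
  obtain \<sigma> where \<sigma>: "\<sigma> \<in> dyadic_sorting_perms n"
    and large: "\<And>i. i \<in> {1..n} \<Longrightarrow> real i \<le> \<delta> * real n \<Longrightarrow> \<nu> / sqrt n < \<bar>x (\<sigma> i)\<bar>"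
    and small: "\<And>i. i \<in> {1..n} \<Longrightarrow> (x (\<sigma> i))^2 * real i \<le> 2"
    using exists_dyadic_sorting_perm[OF x \<nu>] by blast
  have T: "0 \<le> threshold n p x L" by (rule Y_good_threshold_nonneg[OF Y C' n p s xs L])
  have close: "\<bar>sqrt n / threshold n p x L * x (\<sigma> i) - Y p x L s (\<sigma> i)\<bar> \<le> 1"
    if "i \<in> {1..n}" for i
    using Y_good_close[OF Y p s xs L] permutes_in_image[OF dyadic_sorting_perms_permute[OF \<sigma>]] that
    by blast
  have "\<nu> / threshold n p x L - 1 < \<bar>real_of_int (Y p x L s (\<sigma> i))\<bar>"
    if "i \<in> {1..n}" "real i \<le> \<delta> * real n" for i
    using abs_gt_of_close[OF close[OF that(1)] T _ large[OF that]] n by simp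
  moreover have "\<bar>real_of_int (Y p x L s (\<sigma> i))\<bar>
      \<le> 2 powr ((real j + 1) / 2) / (sqrt \<delta> * threshold n p x L) + 1"
    if "i \<in> {1..n}" "2 powr (- real j) * \<delta> * real n < real i" for i j
    using abs_le_of_close[OF close[OF that(1)] T \<delta> _ small[OF that(1)] that(2)] n by simp
  ultimately show ?thesis using \<sigma> by blast
qed

theorem lemma5p3:
  fixes C' c' :: real
  assumes "C' > 0" and "c' > 0"
  shows "\<exists>C>0. \<forall>n::nat. n \<ge> 2 \<longrightarrow>
    (\<forall>Y. Y_good C' c' n Y \<longrightarrow>
      (\<exists>Perms. (\<forall>\<sigma>\<in>Perms. \<sigma> permutes {1..n}) \<and> real (card Perms) \<le> C ^ n \<and>
        (\<forall>p \<delta> s \<nu> L x.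
           0 < p \<and> p \<le> 1/2 \<and> 0 < \<delta> \<and> \<delta> \<le> 1/2 \<and> -1 \<le> s \<and> s \<le> 0 \<and>
           0 < \<nu> \<and> \<nu> \<le> 1 \<and> 1 \<le> L \<and> x \<in> Incomp n \<delta> \<nu> \<longrightarrow>
           (\<exists>\<sigma>\<in>Perms.
              (\<forall>i\<in>{1..n}. real i \<le> \<delta> * real n \<longrightarrow>
                 \<bar>real_of_int (Y p x L s (\<sigma> i))\<bar> > \<nu> / threshold n p x L - 1) \<and>
              (\<forall>j::nat. real j \<le> log 2 (\<delta> * real n) \<longrightarrow>
                 (\<forall>i\<in>{1..n}. real i > 2 powr (- real j) * \<delta> * real n \<longrightarrow>
                   \<bar>real_of_int (Y p x L s (\<sigma> i))\<bar>
                     \<le> 2 powr ((real j + 1) / 2) / (sqrt \<delta> * threshold n p x L) + 1))))))"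
  apply (intro exI[of _ "64::real"] conjI allI impI)
   apply simp
  subgoal premises prems for n Y
  proof -
    have n: "0 < n" "1 \<le> n" using prems(1) by simp_all
    show ?thesis
      by (intro exI[of _ "dyadic_sorting_perms n"] conjI ballI allI impI
            dyadic_sorting_perms_permute card_dyadic_sorting_perms[OF n(2)],
          assumption, elim conjE,
          drule (7) dyadic_sorting_perm_Y_bounds[OF prems(2) assms(1) n(1)], blast)
  qed
  done

end
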